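(* Let $\mathcal{Q}$ be a set of queries and $\mathcal{R}$ a set of rule sets, equipped with a semantic distance $d_{\text{sem}}$ (on $\mathcal{Q}$ and on $\mathcal{R}$) satisfying the axioms of a metric. Let $E$ be an encoder mapping queries and rule sets to vectors in a Euclidean space, and suppose there is a constant $C>0$ such that $d_{\text{sem}}(A,B)\le C\,\|E(A)-E(B)\|$ for all queries $A,B$ and for all rule sets $A,B$. Let $\Psi:\mathcal{Q}\to\mathcal{R}$ be $L_\Psi$-Lipschitz with respect to $d_{\text{sem}}$, i.e. $d_{\text{sem}}(\Psi(q),\Psi(q'))\le L_\Psi\, d_{\text{sem}}(q,q')$ for some $L_\Psi\ge 0$, and set $\text{Dist}=d_{\text{sem}}$ on $\mathcal{R}$. Let $\mathcal{C}_k$ be a finite set of samples $i$, each consisting of a query $q_i\in\mathcal{Q}$ and a rule set $\mathcal{R}_i\in\mathcal{R}$, with $\mathcal{R}_i^{LLM}=\Psi(q_i)$ and cognitive gap $g_i=\text{Dist}(\mathcal{R}_i^{LLM},\mathcal{R}_i)$. Suppose the cluster has diameter $\epsilon>0$ in the concatenated embedding space, i.e. $\|(E(q_i)\oplus E(\mathcal{R}_i))-(E(q_j)\oplus E(\mathcal{R}_j))\|<\epsilon$ for all $i,j\in\mathcal{C}_k$. Then the intra-cluster variance of the cognitive gap satisfies $$\text{Var}(g_i)<[C\cdot(1+L_\Psi)\cdot\epsilon]^2.$$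
   Context: $\oplus$ denotes vector concatenation and $\|\cdot\|$ the Euclidean norm. $\Psi$ models the LLM's rule-generation function, which, given a query, produces a predicted rule set. $\text{Var}(g_i)$ denotes the variance of the values $g_i$ over the samples $i\in\mathcal{C}_k$ (uniform empirical distribution on the cluster). *)

theory Defs
  imports "HOL-Analysis.Analysis"
begin

definition is_metric :: "('a \<Rightarrow> 'a \<Rightarrow> real) \<Rightarrow> bool" where
  "is_metric d \<longleftrightarrow>
     (\<forall>x y. 0 \<le> d x y) \<and>
     (\<forall>x y. d x y = 0 \<longleftrightarrow> x = y) \<and>
     (\<forall>x y. d x y = d y x) \<and>
     (\<forall>x y z. d x z \<le> d x y + d y z)"

definition emp_mean :: "'i set \<Rightarrow> ('i \<Rightarrow> real) \<Rightarrow> real" where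
  "emp_mean S g = (\<Sum>i\<in>S. g i) / real (card S)"

definition emp_var :: "'i set \<Rightarrow> ('i \<Rightarrow> real) \<Rightarrow> real" where
  "emp_var S g = (\<Sum>i\<in>S. (g i - emp_mean S g)\<^sup>2) / real (card S)"

end

theory Submission
  imports Defs
begin

text \<open>The gap \<open>g\<^sub>i = d(\<Psi> q\<^sub>i, R\<^sub>i)\<close> moves by at most \<open>d(\<Psi> q\<^sub>i, \<Psi> q\<^sub>j) + d(R\<^sub>i, R\<^sub>j)\<close> between
  two samples (triangle inequality), which the Lipschitz bound on \<open>\<Psi>\<close> and the encoder bound turn
  into \<open>C (1 + L\<^sub>\<Psi>)\<close> times the distance of the concatenated embeddings, hence less than
  \<open>C (1 + L\<^sub>\<Psi>) \<epsilon>\<close> inside the cluster. Every value then lies within that spread of the mean, and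
  the variance, a mean of squared deviations, is below its square.\<close>

lemma abs_diff_emp_mean_less:
  assumes "finite S" "i \<in> S" "\<And>j. j \<in> S \<Longrightarrow> \<bar>g i - g j\<bar> < D"
  shows "\<bar>g i - emp_mean S g\<bar> < D"
proof -
  have S_ne: "S \<noteq> {}" and card_pos: "card S > 0"
    using assms(1,2) card_gt_0_iff by blast+
  have "\<bar>g i - emp_mean S g\<bar> = \<bar>\<Sum>j\<in>S. g i - g j\<bar> / real (card S)"
    unfolding emp_mean_def using card_pos by (simp add: sum_subtractf field_simps)
  also have "\<dots> \<le> (\<Sum>j\<in>S. \<bar>g i - g j\<bar>) / real (card S)"
    by (intro divide_right_mono sum_abs) auto
  also have "\<dots> < (\<Sum>j\<in>S. D) / real (card S)"
    using assms card_pos S_ne by (intro divide_strict_right_mono sum_strict_mono) auto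
  also have "\<dots> = D"
    using card_pos by simp
  finally show ?thesis .
qed

lemma emp_var_less_sq:
  assumes "finite S" "D > 0" "\<And>i j. i \<in> S \<Longrightarrow> j \<in> S \<Longrightarrow> g i - g j < D"
  shows "emp_var S g < D\<^sup>2"
proof (cases "S = {}")
  case True
  then show ?thesis
    unfolding emp_var_def using \<open>D > 0\<close> by simp
next
  case False
  have card_pos: "card S > 0"
    using assms(1) False card_gt_0_iff by blast
  have "(g i - emp_mean S g)\<^sup>2 < D\<^sup>2" if "i \<in> S" for i
  proof -
    have "\<bar>g i - emp_mean S g\<bar> < D"
      using assms that by (intro abs_diff_emp_mean_less) (auto simp: abs_less_iff)
    then show ?thesis
      by (metis abs_ge_zero power2_abs power_strict_mono zero_less_numeral)
  qed
  then have "(\<Sum>i\<in>S. (g i - emp_mean S g)\<^sup>2) < (\<Sum>i\<in>S. D\<^sup>2)"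
    using assms(1) False by (intro sum_strict_mono) auto
  then show ?thesis
    unfolding emp_var_def using card_pos by (simp add: divide_less_eq mult.commute)
qed

lemma metric_diff_le:
  assumes "is_metric d"
  shows "d x y - d x' y' \<le> d x x' + d y y'"
proof -
  have sym: "d y' y = d y y'" and tri: "\<And>a b c. d a c \<le> d a b + d b c"
    using assms unfolding is_metric_def by blast+
  have "d x y \<le> d x x' + d x' y" by (rule tri)
  also have "d x' y \<le> d x' y' + d y' y" by (rule tri)
  finally show ?thesis
    using sym by linarith
qed

lemma gap_diff_le_embedding_dist:
  fixes EQ :: "'q \<Rightarrow> 'e::real_normed_vector" and ER :: "'r \<Rightarrow> 'f::real_normed_vector"
  assumes "is_metric dR" "C \<ge> 0" "L \<ge> 0"
    and encQ: "\<And>A B. dQ A B \<le> C * norm (EQ A - EQ B)"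
    and encR: "\<And>A B. dR A B \<le> C * norm (ER A - ER B)"
    and lip: "\<And>x y. dR (\<Psi> x) (\<Psi> y) \<le> L * dQ x y"
  shows "dR (\<Psi> x) y - dR (\<Psi> x') y' \<le> C * (1 + L) * norm ((EQ x, ER y) - (EQ x', ER y'))"
proof -
  let ?n = "norm ((EQ x, ER y) - (EQ x', ER y'))"
  have nQ: "norm (EQ x - EQ x') \<le> ?n"
    using norm_fst_le[of "EQ x - EQ x'" "ER y - ER y'"] by simp
  have nR: "norm (ER y - ER y') \<le> ?n"
    using norm_snd_le[of "ER y - ER y'" "EQ x - EQ x'"] by simp
  have "dR (\<Psi> x) (\<Psi> x') \<le> L * (C * ?n)"
  proof -
    have "dR (\<Psi> x) (\<Psi> x') \<le> L * dQ x x'" by (rule lip)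
    also have "\<dots> \<le> L * (C * norm (EQ x - EQ x'))"
      using encQ \<open>L \<ge> 0\<close> by (simp add: mult_left_mono)
    also have "\<dots> \<le> L * (C * ?n)"
      using nQ \<open>C \<ge> 0\<close> \<open>L \<ge> 0\<close> by (simp add: mult_left_mono)
    finally show ?thesis .
  qed
  moreover have "dR y y' \<le> C * ?n"
    using encR[of y y'] nR \<open>C \<ge> 0\<close> by (meson mult_left_mono order_trans)
  ultimately show ?thesis
    using metric_diff_le[OF \<open>is_metric dR\<close>, of "\<Psi> x" y "\<Psi> x'" y']
    by (simp add: algebra_simps)
qed

theorem theorem2:
  fixes dQ :: "'q \<Rightarrow> 'q \<Rightarrow> real"
    and dR :: "'r \<Rightarrow> 'r \<Rightarrow> real"
    and EQ :: "'q \<Rightarrow> 'e::euclidean_space"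
    and ER :: "'r \<Rightarrow> 'e"
    and \<Psi> :: "'q \<Rightarrow> 'r"
    and C L\<^sub>\<Psi> \<epsilon> :: real
    and Ck :: "'i set"
    and q :: "'i \<Rightarrow> 'q"
    and R :: "'i \<Rightarrow> 'r"
  assumes metQ: "is_metric dQ"
    and metR: "is_metric dR"
    and C_pos: "C > 0"
    and encQ: "\<And>A B. dQ A B \<le> C * norm (EQ A - EQ B)"
    and encR: "\<And>A B. dR A B \<le> C * norm (ER A - ER B)"
    and L_nonneg: "L\<^sub>\<Psi> \<ge> 0"
    and lip: "\<And>x y. dR (\<Psi> x) (\<Psi> y) \<le> L\<^sub>\<Psi> * dQ x y"
    and fin: "finite Ck"
    and eps_pos: "\<epsilon> > 0"
    and diam: "\<And>i j. i \<in> Ck \<Longrightarrow> j \<in> Ck \<Longrightarrow>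
                 norm ((EQ (q i), ER (R i)) - (EQ (q j), ER (R j))) < \<epsilon>"
  shows "emp_var Ck (\<lambda>i. dR (\<Psi> (q i)) (R i)) < (C * (1 + L\<^sub>\<Psi>) * \<epsilon>)\<^sup>2"
proof (rule emp_var_less_sq[OF fin])
  show "C * (1 + L\<^sub>\<Psi>) * \<epsilon> > 0"
    using C_pos L_nonneg eps_pos by simp
next
  fix i j assume "i \<in> Ck" "j \<in> Ck"
  have "dR (\<Psi> (q i)) (R i) - dR (\<Psi> (q j)) (R j)
        \<le> C * (1 + L\<^sub>\<Psi>) * norm ((EQ (q i), ER (R i)) - (EQ (q j), ER (R j)))"
    using C_pos L_nonneg by (intro gap_diff_le_embedding_dist[OF metR _ _ encQ encR lip]) auto
  also have "\<dots> < C * (1 + L\<^sub>\<Psi>) * \<epsilon>"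
    using diam[OF \<open>i \<in> Ck\<close> \<open>j \<in> Ck\<close>] C_pos L_nonneg by (intro mult_strict_left_mono) auto
  finally show "dR (\<Psi> (q i)) (R i) - dR (\<Psi> (q j)) (R j) < C * (1 + L\<^sub>\<Psi>) * \<epsilon>" .
qed

end
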